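(* Let $M_{\mathrm{B_{ii}}}$ be the monoid with generators $a,b,c$ and relations $cbb=bba$, $bc=ab$, $ac=ca$. Then $M_{\mathrm{B_{ii}}}$ satisfies the cancellation condition: for $A,B,X,Y\in M_{\mathrm{B_{ii}}}$, $AXB=AYB$ implies $X=Y$.
   Context: A monoid given by generators and relations is the quotient of the free monoid on the generators by the congruence generated by the relations. *)

theory Defs
  imports Main
begin

datatype gen = a | b | c

type_synonym word = "gen list"

definition rels :: "(word \<times> word) set" where
  "rels = {([c,b,b],[b,b,a]), ([b,c],[a,b]), ([a,c],[c,a])}"

inductive mcong :: "word \<Rightarrow> word \<Rightarrow> bool" where
  rel: "(u, v) \<in> rels \<Longrightarrow> mcong u v"
| refl: "mcong u u"
| sym: "mcong u v \<Longrightarrow> mcong v u"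
| trans: "mcong u v \<Longrightarrow> mcong v w \<Longrightarrow> mcong u w"
| ctx: "mcong u v \<Longrightarrow> mcong (p @ u @ q) (p @ v @ q)"

quotient_type MBii = word / mcong
  morphisms rep_MBii abs_MBii
  by (auto intro!: equivpI reflpI sympI transpI intro: mcong.intros)

lift_definition one_MBii :: MBii is "[]" .
lift_definition mult_MBii :: "MBii \<Rightarrow> MBii \<Rightarrow> MBii" is "(@)"
proof -
  fix u u' v v' assume "mcong u u'" "mcong v v'"
  then have "mcong ([] @ u @ v) ([] @ u' @ v)" and "mcong (u' @ v @ []) (u' @ v' @ [])"
    using mcong.ctx[of u u' "[]" v] mcong.ctx[of v v' u' "[]"] by auto
  then show "mcong (u @ v) (u' @ v')" by (metis append_Nil append_Nil2 mcong.trans)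
qed

end

theory Submission
  imports Defs
begin

text \<open>
  Send a word to the monoid \<open>\<nat>\<^sup>3 \<rtimes> \<nat>\<close> in which \<open>b\<close> rotates the three coordinates:
  reading the word from left to right, an \<open>a\<close> read after \<open>j\<close> letters \<open>b\<close> adds 1 to
  coordinate \<open>j mod 3\<close>, and a \<open>c\<close> to coordinate \<open>(j + 2) mod 3\<close>. The three defining
  relations are respected, and the image determines the congruence class, because every word
  is congruent to a normal form \<open>b^(n-1) c^i b a^j c^k\<close> (or \<open>a^j c^k\<close> if it has no \<open>b\<close>)
  read off from its image. Hence the quotient embeds into the group \<open>\<int>\<^sup>3 \<rtimes> \<int>\<close> and is
  cancellative.
\<close>

lemma mcong_append: "mcong u u' \<Longrightarrow> mcong v v' \<Longrightarrow> mcong (u @ v) (u' @ v')"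
  by (metis append_Nil append_Nil2 mcong.ctx mcong.trans)

lemma mcong_rels_ctx: "(l, r) \<in> rels \<Longrightarrow> mcong (p @ l @ q) (p @ r @ q)"
  by (intro mcong.ctx mcong.rel)

lemmas [trans] = mcong.trans

lemma mcong_Cons: "mcong u v \<Longrightarrow> mcong (x # u) (x # v)"
  using mcong.ctx[of u v "[x]" "[]"] by simp

lemma replicate_a_c_commute: "mcong (replicate p a @ [c]) (c # replicate p a)"
proof (induction p)
  case (Suc p)
  have "mcong (replicate (Suc p) a @ [c]) (a # c # replicate p a)"
    using mcong_Cons[OF Suc] by simp
  also have "mcong \<dots> (c # replicate (Suc p) a)"
    using mcong_rels_ctx[of "[a, c]" "[c, a]" "[]"] by (simp add: rels_def)
  finally show ?case .
qed (simp add: mcong.refl)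

lemma replicate_a_replicate_c_commute:
  "mcong (replicate p a @ replicate q c) (replicate q c @ replicate p a)"
proof (induction q)
  case (Suc q)
  have "mcong (replicate p a @ replicate (Suc q) c) ((c # replicate p a) @ replicate q c)"
    using mcong_append[OF replicate_a_c_commute mcong.refl] by (simp add: replicate_app_Cons_same)
  also have "mcong \<dots> (replicate (Suc q) c @ replicate p a)"
    using mcong_Cons[OF Suc] by simp
  finally show ?case .
qed (simp add: mcong.refl)

lemma replicate_a_b: "mcong (replicate p a @ [b]) (b # replicate p c)"
proof (induction p)
  case (Suc p)
  have "mcong (replicate (Suc p) a @ [b]) (a # b # replicate p c)"
    using mcong_Cons[OF Suc] by simp
  also have "mcong \<dots> (b # replicate (Suc p) c)"
    using mcong_rels_ctx[of "[b, c]" "[a, b]" "[]"] mcong.sym by (simp add: rels_def)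
  finally show ?case .
qed (simp add: mcong.refl)

lemma replicate_c_bb: "mcong (replicate p c @ [b, b]) (b # b # replicate p a)"
proof (induction p)
  case (Suc p)
  have "mcong (replicate (Suc p) c @ [b, b]) (c # b # b # replicate p a)"
    using mcong_Cons[OF Suc] by simp
  also have "mcong \<dots> (b # b # replicate (Suc p) a)"
    using mcong_rels_ctx[of "[c, b, b]" "[b, b, a]" "[]"]
    by (simp add: rels_def replicate_app_Cons_same)
  finally show ?case .
qed (simp add: mcong.refl)

lemma replicate_c_a: "mcong (replicate q c @ [a]) (a # replicate q c)"
  using replicate_a_replicate_c_commute[of 1 q] mcong.sym by simp

lemma replicate_a_c_snoc_a:
  "mcong (replicate p a @ replicate q c @ [a]) (replicate (Suc p) a @ replicate q c)"
  using mcong.ctx[of _ _ "replicate p a" "[]", OF replicate_c_a] by (simp add: replicate_app_Cons_same)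

lemma replicate_a_c_snoc_b:
  "mcong (replicate p a @ replicate q c @ [b]) (replicate q c @ b # replicate p c)"
proof -
  have "mcong (replicate p a @ replicate q c @ [b]) (replicate q c @ replicate p a @ [b])"
    using mcong.ctx[of _ _ "[]" "[b]", OF replicate_a_replicate_c_commute] by simp
  also have "mcong \<dots> (replicate q c @ b # replicate p c)"
    using mcong.ctx[of _ _ "replicate q c" "[]", OF replicate_a_b] by simp
  finally show ?thesis .
qed

lemma replicate_c_b_a_c_snoc_b:
  "mcong (replicate r c @ b # replicate s a @ replicate t c @ [b])
         (b # replicate t c @ b # replicate r a @ replicate s c)"
proof -
  have "mcong (replicate r c @ b # replicate s a @ replicate t c @ [b])
              (replicate r c @ b # replicate t c @ b # replicate s c)"
    using mcong.ctx[of _ _ "replicate r c @ [b]" "[]", OF replicate_a_c_snoc_b] by simp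
  also have "mcong \<dots> (replicate r c @ replicate t a @ b # b # replicate s c)"
    using mcong.ctx[of _ _ "replicate r c" "b # replicate s c", OF mcong.sym[OF replicate_a_b]]
    by simp
  also have "mcong \<dots> (replicate t a @ replicate r c @ b # b # replicate s c)"
    using mcong.ctx[of _ _ "[]" "b # b # replicate s c", OF replicate_a_replicate_c_commute]
      mcong.sym by simp
  also have "mcong \<dots> (replicate t a @ b # b # replicate r a @ replicate s c)"
    using mcong.ctx[of _ _ "replicate t a" "replicate s c", OF replicate_c_bb] by simp
  also have "mcong \<dots> (b # replicate t c @ b # replicate r a @ replicate s c)"
    using mcong.ctx[of _ _ "[]" "b # replicate r a @ replicate s c", OF replicate_a_b] by simp
  finally show ?thesis .
qed

fun coord :: "word \<Rightarrow> nat \<Rightarrow> nat" where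
  "coord [] r = 0"
| "coord (a # w) r = (if r mod 3 = 0 then 1 else 0) + coord w r"
| "coord (b # w) r = coord w (r + 2)"
| "coord (c # w) r = (if r mod 3 = 2 then 1 else 0) + coord w r"

lemma coord_append [simp]:
  "coord (u @ v) r = coord u r + coord v (r + 2 * count_list u b)"
  by (induction u r rule: coord.induct) (simp_all add: algebra_simps)

lemma coord_periodic: "coord w (r + 3 * m) = coord w r"
  by (induction w r rule: coord.induct) (simp_all add: algebra_simps)

lemma coord_no_b: "count_list w b = 0 \<Longrightarrow> r mod 3 = 1 \<Longrightarrow> coord w r = 0"
  by (induction w r rule: coord.induct) auto

lemma mcong_invariants:
  "mcong u v \<Longrightarrow> count_list u b = count_list v b \<and> coord u = coord v"
proof (induction rule: mcong.induct)
  case (rel u v)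
  then show ?case by (auto simp: rels_def fun_eq_iff; presburger)
qed auto

definition normal_form :: "word \<Rightarrow> word" where
  "normal_form w =
    (if count_list w b = 0 then replicate (coord w 0) a @ replicate (coord w 2) c
     else replicate (count_list w b - 1) b @ replicate (coord w (count_list w b + 1)) c @
          b # replicate (coord w (count_list w b)) a @ replicate (coord w (count_list w b + 2)) c)"

lemma normal_form_snoc_no_b:
  assumes "count_list w b = 0"
  shows "mcong (normal_form w @ [x]) (normal_form (w @ [x]))"
proof -
  have nf: "normal_form w = replicate (coord w 0) a @ replicate (coord w 2) c"
    using assms by (simp add: normal_form_def)
  show ?thesis
  proof (cases x)
    case a
    then show ?thesis using assms nf replicate_a_c_snoc_a by (simp add: normal_form_def)
  next
    case b
    have "coord w 1 = 0" using coord_no_b assms by simp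
    moreover have "coord w 3 = coord w 0" using coord_periodic[of w 0 1] by simp
    ultimately show ?thesis
      using assms nf b replicate_a_c_snoc_b
      by (simp add: normal_form_def numeral_2_eq_2 numeral_3_eq_3)
  next
    case c
    then show ?thesis using assms nf by (simp add: normal_form_def mcong.refl replicate_app_Cons_same)
  qed
qed

lemma normal_form_snoc_with_b:
  assumes "count_list w b = n" "n \<noteq> 0"
  shows "mcong (normal_form w @ [x]) (normal_form (w @ [x]))"
proof -
  define f where "f = coord w"
  have nf: "normal_form w = replicate (n - 1) b @
      replicate (f (n + 1)) c @ b # replicate (f n) a @ replicate (f (n + 2)) c"
    using assms by (simp add: normal_form_def f_def)
  show ?thesis
  proof (cases x)
    case a
    have "coord (w @ [a]) (n + 1) = f (n + 1)" "coord (w @ [a]) n = Suc (f n)"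
      "coord (w @ [a]) (n + 2) = f (n + 2)"
      using assms(1) by (simp_all add: f_def) presburger+
    then have "normal_form (w @ [x]) = replicate (n - 1) b @
      replicate (f (n + 1)) c @ b # replicate (Suc (f n)) a @ replicate (f (n + 2)) c"
      using assms a by (simp add: normal_form_def)
    then show ?thesis
      using mcong.ctx[of _ _ "replicate (n - 1) b @ replicate (f (n + 1)) c @ [b]" "[]",
          OF replicate_a_c_snoc_a] nf a
      by simp
  next
    case c
    have "coord (w @ [c]) (n + 1) = f (n + 1)" "coord (w @ [c]) n = f n"
      "coord (w @ [c]) (n + 2) = Suc (f (n + 2))"
      using assms(1) by (simp_all add: f_def) presburger+
    then have "normal_form (w @ [x]) = replicate (n - 1) b @
      replicate (f (n + 1)) c @ b # replicate (f n) a @ replicate (Suc (f (n + 2))) c"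
      using assms c by (simp add: normal_form_def)
    then show ?thesis using nf c by (simp add: mcong.refl replicate_app_Cons_same)
  next
    case b
    have "coord (w @ [b]) (n + 1 + 1) = f (n + 2)" "coord (w @ [b]) (n + 1) = f (n + 1)"
      "coord (w @ [b]) (n + 1 + 2) = f n"
      using coord_periodic[of w n 1] by (simp_all add: f_def eval_nat_numeral)
    moreover have "replicate n b = replicate (n - 1) b @ [b]"
      using assms(2) by (cases n) (simp_all add: replicate_append_same)
    ultimately have "normal_form (w @ [x]) = replicate (n - 1) b @
      b # replicate (f (n + 2)) c @ b # replicate (f (n + 1)) a @ replicate (f n) c"
      using assms b by (simp add: normal_form_def)
    then show ?thesis
      using mcong.ctx[of _ _ "replicate (n - 1) b" "[]", OF replicate_c_b_a_c_snoc_b] nf b by simp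
  qed
qed

lemma mcong_normal_form: "mcong w (normal_form w)"
proof (induction w rule: rev_induct)
  case Nil
  then show ?case by (simp add: normal_form_def mcong.refl)
next
  case (snoc x w)
  have "mcong (w @ [x]) (normal_form w @ [x])" by (rule mcong_append[OF snoc mcong.refl])
  also have "mcong \<dots> (normal_form (w @ [x]))"
    using normal_form_snoc_no_b normal_form_snoc_with_b by blast
  finally show ?case .
qed

lemma mcong_iff_invariants:
  "mcong u v \<longleftrightarrow> count_list u b = count_list v b \<and> coord u = coord v"
proof
  assume "count_list u b = count_list v b \<and> coord u = coord v"
  then have "normal_form u = normal_form v" by (simp add: normal_form_def)
  then show "mcong u v" by (metis mcong_normal_form mcong.sym mcong.trans)
qed (rule mcong_invariants)

lemma mcong_cancel: "mcong (A @ X @ B) (A @ Y @ B) \<Longrightarrow> mcong X Y"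
  unfolding mcong_iff_invariants
proof (intro conjI ext)
  assume h: "count_list (A @ X @ B) b = count_list (A @ Y @ B) b \<and>
    coord (A @ X @ B) = coord (A @ Y @ B)"
  then show nX: "count_list X b = count_list Y b" by simp
  fix r
  have "coord (A @ X @ B) (r + count_list A b) = coord (A @ Y @ B) (r + count_list A b)"
    using h by simp
  then have "coord X (r + count_list A b + 2 * count_list A b) =
        coord Y (r + count_list A b + 2 * count_list A b)"
    using nX by simp
  moreover have "r + count_list A b + 2 * count_list A b = r + 3 * count_list A b" by simp
  ultimately show "coord X r = coord Y r" by (simp only: coord_periodic)
qed

theorem theorem4:
  fixes A B X Y :: MBii
  assumes "mult_MBii (mult_MBii A X) B = mult_MBii (mult_MBii A Y) B"
  shows "X = Y"
  using assms by transfer (simp add: mcong_cancel)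

end
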